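(* Let $\lambda>0$, $\gamma>0$, let $\beta_1=\beta_1(\gamma)$ be the unique positive solution of $\frac{\sqrt\pi}{2}\gamma x(1+x)^{1/2}(3+x)=1$, and let $0\le\beta<\beta_1$. Let $\varphi$ be the unique solution, within the set $K$ of bounded analytic functions $h:[0,\lambda]\to\mathbb{R}$ with $0\le h\le 1$, of \begin{align*} &[(1+\beta y(\eta))y'(\eta)]'+2\eta y'(\eta)=0, \quad 0<\eta<\lambda,\\ &y'(0)+\beta y(0)y'(0)-\gamma y(0)=0,\\ &y(\lambda)=1. \end{align*} Then for all $0<\eta<\lambda$: $0\le\varphi(\eta)\le 1$, $\varphi'(\eta)>0$ and $\varphi''(\eta)<0$. *)

theory Defs
  imports "HOL-Analysis.Analysis"
begin

definition beta1 :: "real \<Rightarrow> real" where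
  "beta1 \<gamma> = (THE x. x > 0 \<and> sqrt pi / 2 * \<gamma> * x * sqrt (1 + x) * (3 + x) = 1)"

definition real_analytic_on :: "(real \<Rightarrow> real) \<Rightarrow> real set \<Rightarrow> bool" where
  "real_analytic_on h S \<longleftrightarrow>
     (\<forall>x\<in>S. \<exists>r>0. \<exists>c::nat \<Rightarrow> real.
        \<forall>y\<in>S. \<bar>y - x\<bar> < r \<longrightarrow> (\<lambda>n. c n * (y - x) ^ n) sums h y)"

definition classK :: "real \<Rightarrow> (real \<Rightarrow> real) set" where
  "classK lam = {h. real_analytic_on h {0..lam} \<and> bounded (h ` {0..lam})
                    \<and> (\<forall>x\<in>{0..lam}. 0 \<le> h x \<and> h x \<le> 1)}"

definition is_solution :: "real \<Rightarrow> real \<Rightarrow> real \<Rightarrow> (real \<Rightarrow> real) \<Rightarrow> bool" where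
  "is_solution \<beta> \<gamma> lam h \<longleftrightarrow>
     (\<exists>h'. (\<forall>x\<in>{0..lam}. (h has_real_derivative h' x) (at x within {0..lam}))
        \<and> (\<forall>\<eta>\<in>{0<..<lam}. \<exists>g. ((\<lambda>x. (1 + \<beta> * h x) * h' x) has_real_derivative g) (at \<eta>)
                                \<and> g + 2 * \<eta> * h' \<eta> = 0)
        \<and> h' 0 + \<beta> * h 0 * h' 0 - \<gamma> * h 0 = 0
        \<and> h lam = 1)"

end

theory Submission
  imports Defs
begin

text \<open>Write \<open>F = (1 + \<beta> \<phi>) \<phi>'\<close> for the flux. The equation says \<open>F' = -2 \<eta> \<phi>' = -2 \<eta> F / (1 + \<beta> \<phi>)\<close>,
  a linear ODE for \<open>F\<close> with bounded coefficient, so \<open>F\<close> either vanishes identically or nowhere.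
  It cannot vanish identically: then \<open>\<phi>\<close> would be constant, hence \<open>\<phi> = 1\<close> and \<open>\<phi>'(0) = 0\<close>,
  contradicting the Robin condition \<open>(1 + \<beta> \<phi>(0)) \<phi>'(0) = \<gamma> \<phi>(0)\<close>. So \<open>F\<close> has constant sign,
  which is positive because \<open>\<phi> \<le> 1 = \<phi>(\<lambda>)\<close> forces \<open>\<phi>' \<ge> 0\<close> somewhere. Finally
  \<open>\<phi>'' = (F / (1 + \<beta> \<phi>))' = -(2 \<eta> \<phi>' (1 + \<beta> \<phi>) + \<beta> \<phi>' F) / (1 + \<beta> \<phi>)\<^sup>2 < 0\<close>.\<close>

lemma has_real_derivative_square_exp:
  assumes "(F has_real_derivative F') (at x)"
  shows "((\<lambda>x. (F x)\<^sup>2 * exp (k * x)) has_real_derivative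
           (2 * F x * F' + k * (F x)\<^sup>2) * exp (k * x)) (at x)"
  by (rule derivative_eq_intros assms refl | simp add: algebra_simps power2_eq_square)+

text \<open>Gronwall's argument: \<open>F\<^sup>2 exp (2 M x)\<close> increases and \<open>F\<^sup>2 exp (-2 M x)\<close> decreases.\<close>
lemma vanishes_if_abs_deriv_le:
  fixes F F' :: "real \<Rightarrow> real"
  assumes deriv: "\<And>x. x \<in> {a..b} \<Longrightarrow> (F has_real_derivative F' x) (at x)"
    and bound: "\<And>x. x \<in> {a..b} \<Longrightarrow> \<bar>F' x\<bar> \<le> M * \<bar>F x\<bar>"
    and c: "c \<in> {a..b}" "F c = 0" and x: "x \<in> {a..b}"
  shows "F x = 0"
proof -
  have prod_bound: "\<bar>2 * F y * F' y\<bar> \<le> 2 * M * (F y)\<^sup>2" if "y \<in> {a..b}" for y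
    using mult_left_mono[OF bound[OF that] abs_ge_zero[of "F y"]]
    by (simp add: abs_mult power2_eq_square algebra_simps)
  consider "x \<le> c" | "c \<le> x" by linarith
  then have "(F x)\<^sup>2 * exp (2 * M * x) \<le> 0 \<or> (F x)\<^sup>2 * exp (- 2 * M * x) \<le> 0"
  proof cases
    case 1
    have "(F x)\<^sup>2 * exp (2 * M * x) \<le> (F c)\<^sup>2 * exp (2 * M * c)"
    proof (rule DERIV_nonneg_imp_nondecreasing[OF 1])
      fix y assume "x \<le> y" "y \<le> c"
      then have y: "y \<in> {a..b}" using x c by auto
      have "0 \<le> 2 * F y * F' y + 2 * M * (F y)\<^sup>2" using prod_bound[OF y] by linarith
      then show "\<exists>D. ((\<lambda>x. (F x)\<^sup>2 * exp (2 * M * x)) has_real_derivative D) (at y) \<and> 0 \<le> D"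
        using has_real_derivative_square_exp[OF deriv[OF y]] by fastforce
    qed
    then show ?thesis using c by simp
  next
    case 2
    have "(F x)\<^sup>2 * exp (- 2 * M * x) \<le> (F c)\<^sup>2 * exp (- 2 * M * c)"
    proof (rule DERIV_nonpos_imp_nonincreasing[OF 2])
      fix y assume "c \<le> y" "y \<le> x"
      then have y: "y \<in> {a..b}" using x c by auto
      have "2 * F y * F' y + - 2 * M * (F y)\<^sup>2 \<le> 0" using prod_bound[OF y] by linarith
      then show "\<exists>D. ((\<lambda>x. (F x)\<^sup>2 * exp (- 2 * M * x)) has_real_derivative D) (at y) \<and> D \<le> 0"
        using has_real_derivative_square_exp[OF deriv[OF y]] by (fastforce simp: mult_nonpos_nonneg)
    qed
    then show ?thesis using c by simp
  qed
  then show ?thesis by (simp add: mult_le_0_iff)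
qed

lemma pos_if_continuous_nonzero_connected:
  fixes f :: "'a::topological_space \<Rightarrow> real"
  assumes "connected S" "continuous_on S f" "\<And>x. x \<in> S \<Longrightarrow> f x \<noteq> 0"
    and "a \<in> S" "f a > 0" "b \<in> S"
  shows "f b > 0"
proof (rule ccontr)
  assume "\<not> f b > 0"
  then have "f b < 0" using assms(3,6) by force
  moreover have "{f b..f a} \<subseteq> f ` S"
    using assms by (intro connected_contains_Icc connected_continuous_image) auto
  ultimately have "0 \<in> f ` S" using assms(5) by auto
  then show False using assms(3) by force
qed

locale diffusion_bvp =
  fixes \<beta> \<gamma> lam :: real and \<phi> \<phi>' :: "real \<Rightarrow> real"
  assumes lam_pos: "lam > 0" and gamma_pos: "\<gamma> > 0" and beta_nonneg: "0 \<le> \<beta>"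
    and phi_range: "\<And>x. x \<in> {0..lam} \<Longrightarrow> 0 \<le> \<phi> x \<and> \<phi> x \<le> 1"
    and phi_deriv: "\<And>x. x \<in> {0..lam} \<Longrightarrow> (\<phi> has_real_derivative \<phi>' x) (at x within {0..lam})"
    and flux_deriv_eq: "\<And>\<eta>. \<eta> \<in> {0<..<lam} \<Longrightarrow>
          ((\<lambda>x. (1 + \<beta> * \<phi> x) * \<phi>' x) has_real_derivative - 2 * \<eta> * \<phi>' \<eta>) (at \<eta>)"
    and robin_bc: "\<phi>' 0 + \<beta> * \<phi> 0 * \<phi>' 0 - \<gamma> * \<phi> 0 = 0"
    and right_bc: "\<phi> lam = 1"
begin

definition flux :: "real \<Rightarrow> real" where
  "flux x = (1 + \<beta> * \<phi> x) * \<phi>' x"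

lemma diffusivity_ge_one: "x \<in> {0..lam} \<Longrightarrow> 1 \<le> 1 + \<beta> * \<phi> x"
  using phi_range beta_nonneg by simp

lemma phi_has_derivative_at: "t \<in> {0<..<lam} \<Longrightarrow> (\<phi> has_real_derivative \<phi>' t) (at t)"
  using phi_deriv[of t] at_within_interior[of t "{0..lam}"] by simp

lemma deriv_phi: "t \<in> {0<..<lam} \<Longrightarrow> deriv \<phi> t = \<phi>' t"
  using phi_has_derivative_at by (rule DERIV_imp_deriv)

lemma flux_has_derivative: "t \<in> {0<..<lam} \<Longrightarrow> (flux has_real_derivative - 2 * t * \<phi>' t) (at t)"
  using flux_deriv_eq unfolding flux_def[abs_def] .

lemma phi'_eq_flux: "t \<in> {0..lam} \<Longrightarrow> \<phi>' t = flux t / (1 + \<beta> * \<phi> t)"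
  using diffusivity_ge_one[of t] unfolding flux_def by simp

lemma abs_flux_deriv_le: "t \<in> {0<..<lam} \<Longrightarrow> \<bar>- 2 * t * \<phi>' t\<bar> \<le> 2 * lam * \<bar>flux t\<bar>"
  using diffusivity_ge_one[of t] beta_nonneg phi_range[of t]
  by (auto simp: flux_def abs_mult intro!: mult_mono mult_le_cancel_right1[THEN iffD2])

lemma phi_eq_one_if_phi'_vanishes:
  assumes flat: "\<And>t. t \<in> {0<..<lam} \<Longrightarrow> \<phi>' t = 0" and x: "x \<in> {0..lam}"
  shows "\<phi> x = 1"
proof -
  have "\<phi> y = \<phi> 0" if "y \<in> {0..lam}" for y
  proof (rule has_derivative_zero_unique_strong_interval[of "{0, lam}" 0 lam \<phi>])
    show "continuous_on {0..lam} \<phi>" using phi_deriv by (rule DERIV_continuous_on)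
    fix z assume "z \<in> {0..lam} - {0, lam}"
    then have "(\<phi> has_real_derivative 0) (at z within {0..lam})"
      using phi_has_derivative_at[of z] flat[of z] by (auto intro: has_field_derivative_at_within)
    then show "(\<phi> has_derivative (\<lambda>h. 0)) (at z within {0..lam})"
      by (metis has_field_derivative_def lambda_zero)
  qed (use that in auto)
  then show ?thesis using x right_bc lam_pos by (metis atLeastAtMost_iff less_eq_real_def)
qed

lemma phi'_nonzero_somewhere: "\<exists>t\<in>{0<..<lam}. \<phi>' t \<noteq> 0"
proof (rule ccontr)
  assume "\<not> ?thesis"
  then have one: "\<And>x. x \<in> {0..lam} \<Longrightarrow> \<phi> x = 1" using phi_eq_one_if_phi'_vanishes by blast
  have "(\<phi> has_real_derivative 0) (at 0 within {0..lam})"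
    by (rule has_field_derivative_transform_within[of "\<lambda>x. 1" 0 0 _ 1]) (use lam_pos one in auto)
  moreover have "at 0 within {0..lam} \<noteq> (bot :: real filter)"
    using lam_pos by (simp add: at_within_Icc_at_right)
  ultimately have "\<phi>' 0 = 0"
    using has_field_derivative_unique phi_deriv[of 0] lam_pos by force
  then show False using robin_bc one[of 0] lam_pos gamma_pos by simp
qed

lemma flux_nonzero: "t \<in> {0<..<lam} \<Longrightarrow> flux t \<noteq> 0"
proof
  assume t: "t \<in> {0<..<lam}" and "flux t = 0"
  have "\<phi>' s = 0" if s: "s \<in> {0<..<lam}" for s
  proof -
    have sub: "{min s t..max s t} \<subseteq> {0<..<lam}" using s t by auto
    have "flux s = 0"
      by (rule vanishes_if_abs_deriv_le[where F' = "\<lambda>x. - 2 * x * \<phi>' x" and M = "2 * lam" and c = t])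
        (use sub \<open>flux t = 0\<close> flux_has_derivative abs_flux_deriv_le in auto)
    then show ?thesis using phi'_eq_flux[of s] s by simp
  qed
  then show False using phi'_nonzero_somewhere by blast
qed

lemma flux_pos: assumes t: "t \<in> {0<..<lam}" shows "flux t > 0"
proof -
  have "continuous_on {t..lam} \<phi>"
    using DERIV_continuous_on[OF phi_deriv] by (rule continuous_on_subset) (use t in auto)
  moreover have "\<phi> differentiable (at x)" if "t < x" "x < lam" for x
    using phi_has_derivative_at[of x] that t real_differentiable_def by auto
  ultimately obtain l z where z: "t < z" "z < lam" "(\<phi> has_real_derivative l) (at z)"
      and mvt: "\<phi> lam - \<phi> t = (lam - t) * l"
    using MVT[of t lam \<phi>] t by auto
  have zi: "z \<in> {0<..<lam}" using z t by auto
  have "l = \<phi>' z" using DERIV_unique[OF z(3) phi_has_derivative_at[OF zi]] .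
  moreover have "0 \<le> \<phi> lam - \<phi> t" using right_bc phi_range[of t] t by auto
  ultimately have "0 \<le> \<phi>' z" using mvt t by (simp add: zero_le_mult_iff)
  then have "0 \<le> flux z" using diffusivity_ge_one[of z] zi unfolding flux_def by simp
  then have pos_z: "0 < flux z" using flux_nonzero[OF zi] by linarith
  have cont: "continuous_on {0<..<lam} flux"
    by (rule continuous_at_imp_continuous_on) (use DERIV_isCont[OF flux_has_derivative] in blast)
  show ?thesis
    by (rule pos_if_continuous_nonzero_connected[OF connected_Ioo cont _ zi pos_z t])
      (rule flux_nonzero)
qed

lemma phi'_pos: "t \<in> {0<..<lam} \<Longrightarrow> \<phi>' t > 0"
  using flux_pos[of t] diffusivity_ge_one[of t] phi'_eq_flux[of t] by simp

lemma deriv2_phi_neg: assumes t: "t \<in> {0<..<lam}" shows "deriv (deriv \<phi>) t < 0"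
proof -
  let ?p = "1 + \<beta> * \<phi> t"
  have p: "1 \<le> ?p" using diffusivity_ge_one t by simp
  have "((\<lambda>x. flux x / (1 + \<beta> * \<phi> x)) has_real_derivative
          (- 2 * t * \<phi>' t * ?p - flux t * (\<beta> * \<phi>' t)) / (?p * ?p)) (at t)"
    by (rule derivative_eq_intros flux_has_derivative[OF t] phi_has_derivative_at[OF t] refl
        | use p in simp)+
  then have "(deriv \<phi> has_real_derivative
          (- 2 * t * \<phi>' t * ?p - flux t * (\<beta> * \<phi>' t)) / (?p * ?p)) (at t)"
    by (rule has_field_derivative_transform_within_open[of _ _ _ "{0<..<lam}"])
      (use t deriv_phi phi'_eq_flux in auto)
  then have "deriv (deriv \<phi>) t = (- 2 * t * \<phi>' t * ?p - flux t * (\<beta> * \<phi>' t)) / (?p * ?p)"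
    by (rule DERIV_imp_deriv)
  moreover have "- 2 * t * \<phi>' t * ?p < 0" using t phi'_pos[OF t] p by (simp add: mult_pos_pos)
  moreover have "0 \<le> flux t * (\<beta> * \<phi>' t)" using flux_pos[OF t] phi'_pos[OF t] beta_nonneg by simp
  ultimately show ?thesis using p by (simp add: divide_neg_pos)
qed

end

theorem mainTheorem8:
  fixes lam \<gamma> \<beta> :: real and \<phi> :: "real \<Rightarrow> real"
  assumes "lam > 0" and "\<gamma> > 0"
    and "0 \<le> \<beta>" and "\<beta> < beta1 \<gamma>"
    and "\<phi> \<in> classK lam" and "is_solution \<beta> \<gamma> lam \<phi>"
    and "\<forall>h. h \<in> classK lam \<and> is_solution \<beta> \<gamma> lam h \<longrightarrow> (\<forall>x\<in>{0..lam}. h x = \<phi> x)"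
  shows "\<forall>\<eta>\<in>{0<..<lam}. 0 \<le> \<phi> \<eta> \<and> \<phi> \<eta> \<le> 1 \<and> deriv \<phi> \<eta> > 0 \<and> deriv (deriv \<phi>) \<eta> < 0"
proof -
  obtain \<phi>' where deriv: "\<forall>x\<in>{0..lam}. (\<phi> has_real_derivative \<phi>' x) (at x within {0..lam})"
    and flux: "\<forall>\<eta>\<in>{0<..<lam}. \<exists>g. ((\<lambda>x. (1 + \<beta> * \<phi> x) * \<phi>' x) has_real_derivative g) (at \<eta>)
                                  \<and> g + 2 * \<eta> * \<phi>' \<eta> = 0"
    and bcs: "\<phi>' 0 + \<beta> * \<phi> 0 * \<phi>' 0 - \<gamma> * \<phi> 0 = 0" "\<phi> lam = 1"
    using assms(6) unfolding is_solution_def by blast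
  have flux_deriv: "((\<lambda>x. (1 + \<beta> * \<phi> x) * \<phi>' x) has_real_derivative - 2 * \<eta> * \<phi>' \<eta>) (at \<eta>)"
    if \<eta>: "\<eta> \<in> {0<..<lam}" for \<eta>
  proof -
    obtain g where "((\<lambda>x. (1 + \<beta> * \<phi> x) * \<phi>' x) has_real_derivative g) (at \<eta>)"
      and "g + 2 * \<eta> * \<phi>' \<eta> = 0"
      using flux \<eta> by blast
    then show ?thesis by (metis add.commute add_eq_0_iff mult_minus_left)
  qed
  have range: "0 \<le> \<phi> x \<and> \<phi> x \<le> 1" if "x \<in> {0..lam}" for x
    using assms(5) that unfolding classK_def by blast
  interpret diffusion_bvp \<beta> \<gamma> lam \<phi> \<phi>'
    by unfold_locales (use assms(1-3) range deriv flux_deriv bcs in auto)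
  show ?thesis using phi_range phi'_pos deriv_phi deriv2_phi_neg by auto
qed

end
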